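(* Let $p,q\geq 2$ be relatively prime integers. Then $\mathrm{real}_{pq}(G_{p,q}(\mathrm{config}_{pq}(\xi)))=p\xi$ for all real $\xi\geq 0$.
   Context: For an integer $n>1$, $A_n=\{0,1,\dots,n-1\}$. For real $\xi\geq0$, let $\xi=\sum_{i\in\mathbb{Z}}\xi_i n^i$ be the unique base-$n$ expansion with $\xi_i\in A_n$ and $\xi_i\neq n-1$ for infinitely many $i<0$; define $\mathrm{config}_n(\xi)\in A_n^{\mathbb{Z}}$ by $\mathrm{config}_n(\xi)(i)=\xi_{-i}$. For $c\in A_n^{\mathbb{Z}}$ with $c(i)=0$ for all sufficiently small $i$, $\mathrm{real}_n(c)=\sum_{i\in\mathbb{Z}}c(-i)n^i$. Define $g_{p,q}:A_{pq}\times A_{pq}\to A_{pq}$ by writing $x=x_1q+x_0$, $y=y_1q+y_0$ with $x_0,y_0\in A_q$, $x_1,y_1\in A_p$ (uniquely), and setting $g_{p,q}(x,y)=x_0p+y_1$; and $G_{p,q}:A_{pq}^{\mathbb{Z}}\to A_{pq}^{\mathbb{Z}}$ by $G_{p,q}(c)(i)=g_{p,q}(c(i),c(i+1))$. *)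

theory Defs
  imports "HOL-Analysis.Analysis"
begin

text \<open>A base-n digit sequence d (d i is the coefficient of n^i) is THE base-n expansion
of xi: digits in A_n = {0..n-1}, d i \<noteq> n-1 for infinitely many negative i,
and xi = sum over all integers i of d i * n^i.\<close>
definition is_expansion :: "nat \<Rightarrow> real \<Rightarrow> (int \<Rightarrow> nat) \<Rightarrow> bool" where
  "is_expansion n \<xi> d \<longleftrightarrow>
     (\<forall>i. d i < n) \<and>
     infinite {i::int. i < 0 \<and> d i \<noteq> n - 1} \<and>
     ((\<lambda>i. real (d i) * real n powi i) has_sum \<xi>) UNIV"

definition config :: "nat \<Rightarrow> real \<Rightarrow> int \<Rightarrow> nat" where
  "config n \<xi> = (\<lambda>i. (THE d. is_expansion n \<xi> d) (- i))"

definition realn :: "nat \<Rightarrow> (int \<Rightarrow> nat) \<Rightarrow> real" where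
  "realn n c = (\<Sum>\<^sub>\<infinity>i\<in>(UNIV::int set). real (c (- i)) * real n powi i)"

text \<open>x = x1*q + x0 with x0 < q, so x0 = x mod q and x1 = x div q.\<close>
definition g :: "nat \<Rightarrow> nat \<Rightarrow> nat \<Rightarrow> nat \<Rightarrow> nat" where
  "g p q x y = (x mod q) * p + y div q"

definition G :: "nat \<Rightarrow> nat \<Rightarrow> (int \<Rightarrow> nat) \<Rightarrow> int \<Rightarrow> nat" where
  "G p q c = (\<lambda>i. g p q (c i) (c (i + 1)))"

end

theory Submission
  imports Defs
begin

text \<open>Split every base-\<open>pq\<close> digit of \<open>\<xi>\<close> as \<open>q h + l\<close> with \<open>l < q\<close>. Then
\<open>\<xi> = L + q H\<close>, where \<open>L\<close> and \<open>H\<close> are the numbers whose digits are the low parts \<open>l\<close> and the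
high parts \<open>h\<close>. The digit of \<open>G(config \<xi>)\<close> at position \<open>i\<close> is \<open>p l\<close> at \<open>i\<close> plus \<open>h\<close> at \<open>i - 1\<close>,
so it represents \<open>p L + pq H = p \<xi>\<close>. The only real work is to identify \<open>config\<close>: the base-\<open>n\<close>
expansion with infinitely many non-maximal negative digits exists and is unique, its digits being
\<open>\<lfloor>\<xi> / n\<^sup>k\<rfloor> mod n\<close>.\<close>

lemma sum_int_telescope:
  fixes v :: "int \<Rightarrow> 'a::ab_group_add"
  assumes "a \<le> b"
  shows "(\<Sum>i\<in>{a..<b}. v i - v (i + 1)) = v a - v b"
  using assms
proof (induction b rule: int_ge_induct)
  case (step b)
  have "{a..<b + 1} = insert b {a..<b}" using step.hyps by auto
  then show ?case using step by simp
qed simp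

lemma sum_geometric_powi:
  fixes N :: real
  assumes "a \<le> b" "N \<noteq> 0"
  shows "(\<Sum>i\<in>{a..<b}. (N - 1) * N powi i) = N powi b - N powi a"
proof -
  have "(\<Sum>i\<in>{a..<b}. (N - 1) * N powi i) = (\<Sum>i\<in>{a..<b}. - (N powi i) - - (N powi (i + 1)))"
    using assms(2) by (simp add: power_int_add_1 algebra_simps)
  also have "\<dots> = N powi b - N powi a"
    using sum_int_telescope[OF assms(1), of "\<lambda>i. - (N powi i)"] by simp
  finally show ?thesis .
qed

lemma exists_powi_less:
  fixes N \<epsilon> :: real
  assumes "N > 1" "\<epsilon> > 0"
  obtains a where "a < c" "N powi a < \<epsilon>"
proof -
  obtain m where m: "(1 / N) ^ m < \<epsilon>"
    using real_arch_pow_inv[OF assms(2), of "1 / N"] assms(1) by auto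
  define a where "a = min (c - 1) (- int m)"
  have "N powi a \<le> N powi (- int m)"
    by (rule power_int_increasing) (use assms in \<open>auto simp: a_def\<close>)
  also have "\<dots> = (1 / N) ^ m"
    by (simp add: power_int_minus power_int_of_nat power_one_over inverse_eq_divide)
  finally show ?thesis using m by (intro that[of a]) (auto simp: a_def)
qed

lemma finite_int_set_subset_atLeastLessThan:
  fixes F :: "int set"
  assumes "finite F"
  obtains a b where "F \<subseteq> {a..<b}"
proof -
  obtain a where "\<forall>x\<in>F. a \<le> x" using bdd_below_finite[OF assms] unfolding bdd_below_def by auto
  moreover obtain b where "\<forall>x\<in>F. x \<le> b" using bdd_above_finite[OF assms] unfolding bdd_above_def by auto
  ultimately have "F \<subseteq> {a..<b + 1}" by auto
  then show ?thesis using that by blast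
qed

definition digit :: "nat \<Rightarrow> real \<Rightarrow> int \<Rightarrow> nat" where
  "digit n \<xi> k = nat (\<lfloor>\<xi> / real n powi k\<rfloor> mod int n)"

definition truncation :: "nat \<Rightarrow> real \<Rightarrow> int \<Rightarrow> real" where
  "truncation n \<xi> k = of_int \<lfloor>\<xi> / real n powi k\<rfloor> * real n powi k"

lemma digit_less: "n > 0 \<Longrightarrow> digit n \<xi> k < n"
  unfolding digit_def by (simp add: nat_less_iff)

lemma floor_divide_powi_succ:
  assumes "n > 0"
  shows "\<lfloor>\<xi> / real n powi (k + 1)\<rfloor> = \<lfloor>\<xi> / real n powi k\<rfloor> div int n"
proof -
  have "real n powi (k + 1) = real n powi k * real n"
    using assms by (simp add: power_int_add_1)
  then have "\<xi> / real n powi (k + 1) = \<xi> / real n powi k / real_of_int (int n)"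
    by (metis divide_divide_eq_left of_int_of_nat_eq)
  then show ?thesis
    by (simp only:) (rule floor_divide_real_eq_div, simp)
qed

lemma digit_term_eq_truncation_diff:
  assumes "n > 0"
  shows "real (digit n \<xi> k) * real n powi k = truncation n \<xi> k - truncation n \<xi> (k + 1)"
proof -
  define F where "F = \<lfloor>\<xi> / real n powi k\<rfloor>"
  have "F = int n * (F div int n) + F mod int n" by simp
  then have "real_of_int (F mod int n) = real_of_int F - real n * real_of_int (F div int n)"
    by (metis add_diff_cancel_left' of_int_diff of_int_mult of_int_of_nat_eq)
  moreover have "real (digit n \<xi> k) = real_of_int (F mod int n)"
    using assms by (simp add: digit_def F_def)
  moreover have "real n powi (k + 1) = real n powi k * real n"
    using assms by (simp add: power_int_add_1)
  ultimately show ?thesis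
    unfolding truncation_def floor_divide_powi_succ[OF assms] F_def[symmetric]
    by (simp only:) (simp add: algebra_simps)
qed

lemma truncation_le: "n > 0 \<Longrightarrow> truncation n \<xi> k \<le> \<xi>"
  unfolding truncation_def by (simp add: pos_le_divide_eq[symmetric])

lemma truncation_gt: "n > 0 \<Longrightarrow> \<xi> - real n powi k < truncation n \<xi> k"
proof -
  assume "n > 0"
  have "\<xi> / real n powi k < real_of_int \<lfloor>\<xi> / real n powi k\<rfloor> + 1" by simp
  with \<open>n > 0\<close> show ?thesis
    unfolding truncation_def by (simp add: pos_divide_less_eq algebra_simps)
qed

lemma truncation_nonneg: "n > 0 \<Longrightarrow> \<xi> \<ge> 0 \<Longrightarrow> truncation n \<xi> k \<ge> 0"
  unfolding truncation_def by simp

lemma truncation_eq_0: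
  assumes "n > 0" "0 \<le> \<xi>" "\<xi> < real n ^ m"
  shows "truncation n \<xi> (int m) = 0"
proof -
  have "0 \<le> \<xi> / real n powi int m" "\<xi> / real n powi int m < 1"
    using assms by (auto simp: power_int_of_nat)
  then show ?thesis by (simp add: truncation_def floor_eq_iff)
qed

lemma sum_digit_terms:
  assumes "n > 0" "a \<le> b"
  shows "(\<Sum>i\<in>{a..<b}. real (digit n \<xi> i) * real n powi i) = truncation n \<xi> a - truncation n \<xi> b"
  using sum_int_telescope[OF assms(2), of "truncation n \<xi>"]
  by (simp add: digit_term_eq_truncation_diff[OF assms(1)])

lemma digits_has_sum:
  assumes n: "n \<ge> 2" and "\<xi> \<ge> 0"
  shows "((\<lambda>i. real (digit n \<xi> i) * real n powi i) has_sum \<xi>) UNIV"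
proof -
  let ?f = "\<lambda>i. real (digit n \<xi> i) * real n powi i"
  obtain m where m: "\<xi> < real n ^ m" using real_arch_pow[of "real n" \<xi>] n by auto
  have top: "truncation n \<xi> (int m) = 0" using truncation_eq_0 m assms by simp
  have bound: "sum ?f F \<le> \<xi>" if "finite F" for F
  proof -
    obtain a b where ab: "F \<subseteq> {a..<b}"
      using finite_int_set_subset_atLeastLessThan[OF \<open>finite F\<close>] .
    have "sum ?f F \<le> sum ?f {a..<max a b}"
      by (rule sum_mono2) (use ab in auto)
    also have "\<dots> \<le> \<xi>"
      using sum_digit_terms[of n a "max a b" \<xi>] truncation_le[of n \<xi> a]
        truncation_nonneg[of n \<xi> "max a b"] assms by simp
    finally show ?thesis .
  qed
  then obtain S where S: "(?f has_sum S) UNIV"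
    using nonneg_bdd_above_summable_on[of UNIV ?f] by (force simp: bdd_above_def summable_on_def)
  have "S \<le> \<xi>" by (rule has_sum_le_finite_sums[OF S bound])
  moreover have "\<xi> \<le> S"
  proof (rule field_le_epsilon)
    fix \<epsilon> :: real assume "\<epsilon> > 0"
    then obtain a where a: "a < int m" "real n powi a < \<epsilon>"
      using exists_powi_less[of "real n" \<epsilon> "int m"] n by auto
    have "truncation n \<xi> a = sum ?f {a..<int m}"
      using sum_digit_terms[of n a "int m" \<xi>] a top n by simp
    also have "\<dots> \<le> S" by (rule finite_sum_le_has_sum[OF S]) auto
    finally show "\<xi> \<le> S + \<epsilon>" using truncation_gt[of n \<xi> a] a n by simp
  qed
  ultimately show ?thesis using S by simp
qed

lemma digits_infinitely_often_not_max:
  assumes n: "n \<ge> 2"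
  shows "infinite {i. i < 0 \<and> digit n \<xi> i \<noteq> n - 1}"
proof
  assume "finite {i. i < 0 \<and> digit n \<xi> i \<noteq> n - 1}"
  then obtain lo hi where "{i. i < 0 \<and> digit n \<xi> i \<noteq> n - 1} \<subseteq> {lo..<hi}"
    by (rule finite_int_set_subset_atLeastLessThan)
  then have max: "digit n \<xi> i = n - 1" if "i < min lo 0" for i
    using that by force
  define k where "k = min lo 0"
  have "0 < truncation n \<xi> k + real n powi k - \<xi>"
    using truncation_gt[of n \<xi> k] n by simp
  moreover have "real n > 1" using n by simp
  ultimately obtain a where a: "a < k" "real n powi a < truncation n \<xi> k + real n powi k - \<xi>"
    using exists_powi_less by blast
  have "truncation n \<xi> a - truncation n \<xi> k = (\<Sum>i\<in>{a..<k}. (real n - 1) * real n powi i)"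
    using sum_digit_terms[of n a k \<xi>] a n max by (auto simp: k_def of_nat_diff intro!: sum.cong)
  also have "\<dots> = real n powi k - real n powi a"
    using sum_geometric_powi[of a k "real n"] a n by simp
  finally have "truncation n \<xi> a > \<xi>" using a by simp
  then show False using truncation_le[of n \<xi> a] n by simp
qed

lemma is_expansion_digit:
  assumes "n \<ge> 2" "\<xi> \<ge> 0"
  shows "is_expansion n \<xi> (digit n \<xi>)"
  using assms digit_less digits_infinitely_often_not_max digits_has_sum
  unfolding is_expansion_def by simp

lemma expansion_eventually_zero:
  fixes d :: "int \<Rightarrow> nat"
  assumes n: "n \<ge> 1" and hs: "((\<lambda>i. real (d i) * real n powi i) has_sum \<xi>) UNIV"
  obtains M where "\<And>i. i \<ge> M \<Longrightarrow> d i = 0"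
proof -
  define S where "S = {i. 0 \<le> i \<and> d i \<noteq> 0}"
  have card_le: "real (card F) \<le> \<xi>" if "finite F" "F \<subseteq> S" for F
  proof -
    have "real (card F) = (\<Sum>i\<in>F. 1)" by simp
    also have "\<dots> \<le> (\<Sum>i\<in>F. real (d i) * real n powi i)"
    proof (rule sum_mono)
      fix i assume "i \<in> F"
      then have "0 \<le> i" "1 \<le> real (d i)" using that by (auto simp: S_def)
      moreover have "1 \<le> real n powi i" using power_int_increasing[of 0 i "real n"] n \<open>0 \<le> i\<close> by simp
      ultimately show "1 \<le> real (d i) * real n powi i" using mult_mono[of 1 "real (d i)" 1] by simp
    qed
    also have "\<dots> \<le> \<xi>" by (rule finite_sum_le_has_sum[OF hs \<open>finite F\<close>]) auto
    finally show ?thesis .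
  qed
  have "finite S"
  proof (rule ccontr)
    assume "infinite S"
    then obtain F where F: "F \<subseteq> S" "finite F" "card F = Suc (nat \<lceil>\<xi>\<rceil>)"
      using infinite_arbitrarily_large by blast
    then have "real (card F) \<le> \<xi>" using card_le by blast
    with F(3) show False by linarith
  qed
  then obtain lo hi where hi: "S \<subseteq> {lo..<hi}" by (rule finite_int_set_subset_atLeastLessThan)
  have "d i = 0" if "i \<ge> max hi 0" for i
  proof (rule ccontr)
    assume "d i \<noteq> 0"
    with that have "i \<in> S" by (simp add: S_def)
    with hi that show False by auto
  qed
  then show ?thesis using that by blast
qed

lemma expansion_lower_sum_less:
  assumes n: "n \<ge> 2" and d: "is_expansion n \<xi> d"
  shows "(\<Sum>\<^sub>\<infinity>i\<in>{..<k}. real (d i) * real n powi i) < real n powi k"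
proof -
  let ?f = "\<lambda>i. real (d i) * real n powi i"
  let ?N = "real n"
  have dlt: "\<And>i. d i < n" and hs: "(?f has_sum \<xi>) UNIV"
    and inf: "infinite {i. i < 0 \<and> d i \<noteq> n - 1}"
    using d unfolding is_expansion_def by auto
  \<comment> \<open>the normalisation of the expansion: a non-maximal digit somewhere below \<open>k\<close>\<close>
  obtain j where j: "j < k" "d j \<noteq> n - 1"
  proof (rule ccontr)
    assume "\<not> thesis"
    then have "{i. i < 0 \<and> d i \<noteq> n - 1} \<subseteq> {k..<0}" using that by force
    then show False using inf finite_subset by blast
  qed
  have dle: "real (d i) + 1 \<le> ?N" for i
    using dlt[of i] by (metis Suc_leI add.commute of_nat_Suc of_nat_le_iff)
  define margin where "margin = (?N - 1 - real (d j)) * ?N powi j"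
  have "margin > 0" using dlt[of j] j(2) n unfolding margin_def by (simp add: of_nat_diff)
  have "(\<Sum>\<^sub>\<infinity>i\<in>{..<k}. ?f i) \<le> ?N powi k - margin"
  proof (rule infsum_le_finite_sums)
    show "?f summable_on {..<k}"
      using hs summable_on_subset_banach[of ?f UNIV] by (auto simp: summable_on_def)
  next
    fix F assume F: "finite F" "F \<subseteq> {..<k}"
    obtain a b where "F \<subseteq> {a..<b}" using finite_int_set_subset_atLeastLessThan[OF F(1)] .
    with F(2) have Fa: "F \<subseteq> {min a j..<k}" by (auto simp: subset_iff)
    have slack: "(\<Sum>i\<in>{min a j..<k}. (?N - 1 - real (d i)) * ?N powi i) \<ge> margin"
      unfolding margin_def
      by (rule member_le_sum) (use j(1) dle n in \<open>auto simp: add.commute le_diff_eq\<close>)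
    have "sum ?f F \<le> sum ?f {min a j..<k}" by (rule sum_mono2) (use Fa in auto)
    also have "\<dots> = (\<Sum>i\<in>{min a j..<k}. (?N - 1) * ?N powi i)
        - (\<Sum>i\<in>{min a j..<k}. (?N - 1 - real (d i)) * ?N powi i)"
      by (simp add: sum_subtractf[symmetric] algebra_simps)
    also have "\<dots> \<le> ?N powi k - margin"
    proof -
      have "(\<Sum>i\<in>{min a j..<k}. (?N - 1) * ?N powi i) = ?N powi k - ?N powi min a j"
        by (rule sum_geometric_powi) (use j(1) n in auto)
      moreover have "0 < ?N powi min a j" using n by simp
      ultimately show ?thesis using slack by linarith
    qed
    finally show "sum ?f F \<le> ?N powi k - margin" .
  qed
  with \<open>margin > 0\<close> show ?thesis by linarith
qed

lemma sum_digit_terms_from_eq_powi_mult: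
  fixes d :: "int \<Rightarrow> nat"
  assumes "n > 0" "k < M"
  obtains K where "(\<Sum>i\<in>{k..<M}. real (d i) * real n powi i) = real n powi k * real K"
    and "K mod n = d k mod n"
proof -
  define K where "K = (\<Sum>i\<in>{k..<M}. d i * n ^ nat (i - k))"
  have shift: "real n powi (k + int m) = real n powi k * real n ^ m" for m
    using assms(1) by (simp add: power_int_add power_int_of_nat)
  have "(\<Sum>i\<in>{k..<M}. real (d i) * real n powi i)
      = (\<Sum>i\<in>{k..<M}. real n powi k * (real (d i) * real n ^ nat (i - k)))"
  proof (rule sum.cong)
    fix i assume "i \<in> {k..<M}"
    then have "i = k + int (nat (i - k))" by simp
    then show "real (d i) * real n powi i = real n powi k * (real (d i) * real n ^ nat (i - k))"
      using shift[of "nat (i - k)"] by (metis mult.left_commute)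
  qed simp
  also have "\<dots> = real n powi k * real K" by (simp add: K_def sum_distrib_left)
  finally have "(\<Sum>i\<in>{k..<M}. real (d i) * real n powi i) = real n powi k * real K" .
  moreover have "K mod n = d k mod n"
  proof -
    have "{k..<M} = insert k {k + 1..<M}" using assms(2) by auto
    moreover have "n dvd (\<Sum>i\<in>{k + 1..<M}. d i * n ^ nat (i - k))"
    proof (rule dvd_sum)
      fix i assume "i \<in> {k + 1..<M}"
      then have "nat (i - k) = Suc (nat (i - k - 1))" by auto
      then show "n dvd d i * n ^ nat (i - k)" by simp
    qed
    ultimately show ?thesis unfolding K_def by (simp add: mod_add_right_eq[symmetric])
  qed
  ultimately show ?thesis by (rule that)
qed

lemma is_expansion_imp_digit:
  assumes n: "n \<ge> 2" and d: "is_expansion n \<xi> d"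
  shows "d = digit n \<xi>"
proof
  fix k
  let ?f = "\<lambda>i. real (d i) * real n powi i"
  have hs: "(?f has_sum \<xi>) UNIV" and dlt: "d k < n" using d unfolding is_expansion_def by auto
  obtain M0 where M0: "\<And>i. i \<ge> M0 \<Longrightarrow> d i = 0"
    using expansion_eventually_zero[of n d \<xi>] n hs by auto
  define M where "M = max M0 (k + 1)"
  have M: "\<And>i. i \<ge> M \<Longrightarrow> d i = 0" "k < M" using M0 by (auto simp: M_def)
  obtain K where K: "(\<Sum>i\<in>{k..<M}. ?f i) = real n powi k * real K" "K mod n = d k mod n"
    using sum_digit_terms_from_eq_powi_mult[of n k M d] M(2) n by auto
  define T where "T = (\<Sum>\<^sub>\<infinity>i\<in>{..<k}. ?f i)"
  have "(?f has_sum (T + (\<Sum>i\<in>{k..<M}. ?f i) + 0)) ({..<k} \<union> {k..<M} \<union> {M..})"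
  proof (intro has_sum_Un_disjoint)
    show "(?f has_sum T) {..<k}"
      unfolding T_def
      by (rule has_sum_infsum, rule summable_on_subset_banach[of _ UNIV]) (use hs in \<open>auto simp: summable_on_def\<close>)
  qed (use M in \<open>auto intro: has_sum_0\<close>)
  moreover have "{..<k} \<union> {k..<M} \<union> {M..} = UNIV" using M(2) by auto
  ultimately have "\<xi> = T + real n powi k * real K" using hs K(1) has_sum_unique by fastforce
  moreover have "0 \<le> T" "T < real n powi k"
    using expansion_lower_sum_less[OF n d] unfolding T_def by (auto intro: infsum_nonneg)
  ultimately have "\<lfloor>\<xi> / real n powi k\<rfloor> = int K"
    using n by (simp add: floor_eq_iff field_simps)
  then show "d k = digit n \<xi> k"
    using K(2) dlt unfolding digit_def by (simp flip: of_nat_mod)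
qed

lemma config_eq_digit:
  assumes "n \<ge> 2" "\<xi> \<ge> 0"
  shows "config n \<xi> = (\<lambda>i. digit n \<xi> (- i))"
proof -
  have "(THE d. is_expansion n \<xi> d) = digit n \<xi>"
    using assms is_expansion_digit is_expansion_imp_digit by blast
  then show ?thesis unfolding config_def by simp
qed

lemma has_sum_shift_int:
  fixes f :: "int \<Rightarrow> 'a::topological_comm_monoid_add"
  shows "((\<lambda>i. f (i - 1)) has_sum S) UNIV \<longleftrightarrow> (f has_sum S) UNIV"
  by (rule has_sum_reindex_bij_witness[of _ "\<lambda>i. i + 1" "\<lambda>i. i - 1"]) auto

lemma realn_G:
  fixes c :: "int \<Rightarrow> nat"
  assumes "p > 0" "q > 0"
    and hs: "((\<lambda>i. real (c (- i)) * real (p * q) powi i) has_sum \<xi>) UNIV"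
  shows "realn (p * q) (G p q c) = real p * \<xi>"
proof -
  let ?N = "real (p * q)"
  define low where "low i = real (c (- i) mod q) * ?N powi i" for i
  define high where "high i = real (c (- i) div q) * ?N powi i" for i
  have summable: "(\<lambda>i. real (h (c (- i))) * ?N powi i) summable_on UNIV"
    if "\<And>x. h x \<le> x" for h :: "nat \<Rightarrow> nat"
  proof (rule summable_on_comparison_test)
    show "(\<lambda>i. real (c (- i)) * ?N powi i) summable_on UNIV"
      using hs by (rule has_sum_imp_summable)
    show "real (h (c (- i))) * ?N powi i \<le> real (c (- i)) * ?N powi i" for i
      by (rule mult_right_mono) (simp_all add: that)
  qed simp
  obtain L where L: "(low has_sum L) UNIV"
    using summable[of "\<lambda>x. x mod q"] unfolding low_def summable_on_def by auto
  obtain H where H: "(high has_sum H) UNIV"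
    using summable[of "\<lambda>x. x div q"] unfolding high_def summable_on_def by auto
  have "low i + real q * high i = real (c (- i)) * ?N powi i" for i
  proof -
    have "real (c (- i) mod q) + real q * real (c (- i) div q) = real (c (- i))"
      by (metis mod_mult_div_eq of_nat_add of_nat_mult)
    then show ?thesis unfolding low_def high_def by (metis distrib_right mult.assoc)
  qed
  moreover have "((\<lambda>i. low i + real q * high i) has_sum (L + real q * H)) UNIV"
    by (intro has_sum_add has_sum_cmult_right L H)
  ultimately have low_high: "L + real q * H = \<xi>" using hs has_sum_unique by force
  have "real (G p q c (- i)) * ?N powi i = real p * low i + ?N * high (i - 1)" for i
  proof -
    have "G p q c (- i) = c (- i) mod q * p + c (- (i - 1)) div q"
      by (simp add: G_def g_def)
    moreover have "?N powi i = ?N * ?N powi (i - 1)"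
      using assms(1,2) power_int_add_1'[of ?N "i - 1"] by simp
    ultimately show ?thesis unfolding low_def high_def by (simp add: algebra_simps)
  qed
  moreover have "((\<lambda>i. real p * low i + ?N * high (i - 1)) has_sum (real p * L + ?N * H)) UNIV"
    by (intro has_sum_add has_sum_cmult_right L has_sum_shift_int[THEN iffD2, OF H])
  ultimately have "realn (p * q) (G p q c) = real p * L + ?N * H"
    unfolding realn_def by (simp add: infsumI)
  also have "\<dots> = real p * \<xi>" by (simp flip: low_high add: algebra_simps)
  finally show ?thesis .
qed

theorem lemma1:
  fixes p q :: nat and \<xi> :: real
  assumes "p \<ge> 2" and "q \<ge> 2" and "coprime p q" and "\<xi> \<ge> 0"
  shows "realn (p * q) (G p q (config (p * q) \<xi>)) = real p * \<xi>"
proof -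
  have n: "p * q \<ge> 2" using assms(1,2) mult_le_mono[of 2 p 1 q] by simp
  have "config (p * q) \<xi> = (\<lambda>i. digit (p * q) \<xi> (- i))"
    using config_eq_digit[OF n assms(4)] .
  moreover have "((\<lambda>i. real (digit (p * q) \<xi> i) * real (p * q) powi i) has_sum \<xi>) UNIV"
    using digits_has_sum[OF n assms(4)] .
  ultimately show ?thesis using realn_G[of p q] assms(1,2) by simp
qed

end
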